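(* Let $\bm L=(L_1,\dots,L_r)$ be linear functionals on complex Laurent polynomials with $L_j[w^k]=L_j[w^{-k}]$ for all $k\in\mathbb N$, $j=1,\dots,r$, and let $M_j$ be the linear functional on complex polynomials with $M_j[x^k]=L_j[(w+w^{-1})^k]$, $k\in\mathbb N$; $\bm M=(M_1,\dots,M_r)$. Suppose that $(\bm n;\bm n)$ and $(\bm n+\bm e_j;\bm n)$ are normal for $\bm L$ for all $\bm n\in\mathbb N^r$ and $j=1,\dots,r$. Then $\bm M$ is perfect, and for every $\bm n\in\mathbb N^r$ we have $\alpha_{\bm n;\bm n}\ne-1$ and $$P_{\bm n}(z+z^{-1})=\frac{1}{1+\alpha_{\bm n;\bm n}}\big(\Phi_{\bm n;\bm n}(z)+\Phi_{\bm n;\bm n}(1/z)\big),$$ and, for every $j$ with $n_j\ge1$, $$P_{\bm n}(z+z^{-1})=\Phi_{\bm n;\bm n-\bm e_j}(z)+\Phi_{\bm n;\bm n-\bm e_j}(1/z).$$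
   Context: Fix $r\ge1$; $\mathbb N=\{0,1,2,\dots\}$; $\bm e_j$ is the $j$-th standard unit vector; for $\bm v\in\mathbb Z^r$, $|\bm v|=v_1+\dots+v_r$ (signed). Let $c_{k,j}=L_j[w^{-k}]$. For $(\bm n;\bm m)\in\mathbb Z^r\times\mathbb Z^r$ with $n_j+m_j\ge0$ for all $j$ and $\bm n\ne-\bm m$, $T_{\bm n;\bm m}$ is the square matrix of size $|\bm n|+|\bm m|$ with rows indexed by $(j,k)$, $1\le j\le r$, $-m_j\le k\le n_j-1$ (ordered by $j$, then increasing $k$), columns indexed by $i=-|\bm m|,\dots,|\bm n|-1$, entries $c_{k-i,j}$; $T_{\bm n;-\bm n}:=1$; $(\bm n;\bm m)$ is normal (for $\bm L$) if $\det T_{\bm n;\bm m}\ne0$. For normal $(\bm n;\bm m)$, $\bm n\ne-\bm m$, $\Phi_{\bm n;\bm m}$ is the unique Laurent polynomial in $\operatorname{span}\{z^k\}_{k=-|\bm m|}^{|\bm n|}$ with $z^{|\bm n|}$-coefficient $1$ and $L_j[\Phi_{\bm n;\bm m}(w)w^{-k}]=0$ for $-m_j\le k\le n_j-1$, all $j$; $\Phi_{\bm 0;\bm 0}=1$; $\alpha_{\bm n;\bm m}$ is the $z^{-|\bm m|}$-coefficient of $\Phi_{\bm n;\bm m}$. For the system $\bm M$ on polynomials, a multi-index $\bm n\in\mathbb N^r$ is normal if there is a unique polynomial $P_{\bm n}$ of degree $|\bm n|$ with leading coefficient $1$ such that $M_j[P_{\bm n}(x)x^k]=0$ for $k=0,\dots,n_j-1$,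 $j=1,\dots,r$ (the type II multiple orthogonal polynomial); $\bm M$ is perfect if every $\bm n\in\mathbb N^r$ is normal. *)

theory Defs
  imports Complex_Main "HOL-Computational_Algebra.Polynomial" "Jordan_Normal_Form.Determinant"
begin

(* Conventions: indices j range over {0..<r} (shift of 1..r).
   A linear functional L_j on Laurent polynomials is given by its moments:
   L j k = L_j[w^k] for k :: int.  A Laurent polynomial is a finitely supported
   coefficient function int => complex.  Multi-indices are functions nat => int / nat,
   only the entries j < r matter. *)

definition lapp :: "(nat \<Rightarrow> int \<Rightarrow> complex) \<Rightarrow> nat \<Rightarrow> (int \<Rightarrow> complex) \<Rightarrow> complex" where
  "lapp L j f = (\<Sum>i\<in>{i. f i \<noteq> 0}. f i * L j i)"

(* coefficient function of the Laurent polynomial (w + w^{-1})^k *)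
fun wsym_pow :: "nat \<Rightarrow> int \<Rightarrow> complex" where
  "wsym_pow 0 = (\<lambda>i. if i = 0 then 1 else 0)"
| "wsym_pow (Suc k) = (\<lambda>i. wsym_pow k (i - 1) + wsym_pow k (i + 1))"

definition Mmom :: "(nat \<Rightarrow> int \<Rightarrow> complex) \<Rightarrow> nat \<Rightarrow> nat \<Rightarrow> complex" where
  "Mmom L j k = lapp L j (wsym_pow k)"

definition mapp :: "(nat \<Rightarrow> nat \<Rightarrow> complex) \<Rightarrow> nat \<Rightarrow> complex poly \<Rightarrow> complex" where
  "mapp M j p = (\<Sum>i\<le>degree p. coeff p i * M j i)"

definition is_mop :: "nat \<Rightarrow> (nat \<Rightarrow> nat \<Rightarrow> complex) \<Rightarrow> (nat \<Rightarrow> nat) \<Rightarrow> complex poly \<Rightarrow> bool" where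
  "is_mop r M n P \<longleftrightarrow> degree P = (\<Sum>j<r. n j) \<and> lead_coeff P = 1 \<and>
      (\<forall>j<r. \<forall>k<n j. mapp M j (P * monom 1 k) = 0)"

definition mnormal :: "nat \<Rightarrow> (nat \<Rightarrow> nat \<Rightarrow> complex) \<Rightarrow> (nat \<Rightarrow> nat) \<Rightarrow> bool" where
  "mnormal r M n \<longleftrightarrow> (\<exists>!P. is_mop r M n P)"

definition perfect :: "nat \<Rightarrow> (nat \<Rightarrow> nat \<Rightarrow> complex) \<Rightarrow> bool" where
  "perfect r M \<longleftrightarrow> (\<forall>n::nat \<Rightarrow> nat. (\<forall>j\<ge>r. n j = 0) \<longrightarrow> mnormal r M n)"

definition mop :: "nat \<Rightarrow> (nat \<Rightarrow> nat \<Rightarrow> complex) \<Rightarrow> (nat \<Rightarrow> nat) \<Rightarrow> complex poly" where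
  "mop r M n = (THE P. is_mop r M n P)"

definition vabs :: "nat \<Rightarrow> (nat \<Rightarrow> int) \<Rightarrow> int" where
  "vabs r v = (\<Sum>j<r. v j)"

definition Trows :: "nat \<Rightarrow> (nat \<Rightarrow> int) \<Rightarrow> (nat \<Rightarrow> int) \<Rightarrow> (nat \<times> int) list" where
  "Trows r n m = concat (map (\<lambda>j. map (\<lambda>k. (j, k)) [- m j .. n j - 1]) [0..<r])"

definition cc :: "(nat \<Rightarrow> int \<Rightarrow> complex) \<Rightarrow> int \<Rightarrow> nat \<Rightarrow> complex" where
  "cc L k j = L j (- k)"

(* T_{n;m}: column q corresponds to i = -|m| + q *)
definition Tmat :: "nat \<Rightarrow> (nat \<Rightarrow> int \<Rightarrow> complex) \<Rightarrow> (nat \<Rightarrow> int) \<Rightarrow> (nat \<Rightarrow> int) \<Rightarrow> complex mat" where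
  "Tmat r L n m = (let N = nat (vabs r n + vabs r m) in
     mat N N (\<lambda>(p, q). case Trows r n m ! p of (j, k) \<Rightarrow> cc L (k - (int q - vabs r m)) j))"

definition lnormal :: "nat \<Rightarrow> (nat \<Rightarrow> int \<Rightarrow> complex) \<Rightarrow> (nat \<Rightarrow> int) \<Rightarrow> (nat \<Rightarrow> int) \<Rightarrow> bool" where
  "lnormal r L n m \<longleftrightarrow> (\<forall>j<r. n j + m j \<ge> 0) \<and> det (Tmat r L n m) \<noteq> 0"

definition is_Phi :: "nat \<Rightarrow> (nat \<Rightarrow> int \<Rightarrow> complex) \<Rightarrow> (nat \<Rightarrow> int) \<Rightarrow> (nat \<Rightarrow> int) \<Rightarrow> (int \<Rightarrow> complex) \<Rightarrow> bool" where
  "is_Phi r L n m phi \<longleftrightarrow>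
     (\<forall>k. phi k \<noteq> 0 \<longrightarrow> - vabs r m \<le> k \<and> k \<le> vabs r n) \<and> phi (vabs r n) = 1 \<and>
     (\<forall>j<r. \<forall>k. - m j \<le> k \<and> k \<le> n j - 1 \<longrightarrow> lapp L j (\<lambda>i. phi (i + k)) = 0)"

definition Phi :: "nat \<Rightarrow> (nat \<Rightarrow> int \<Rightarrow> complex) \<Rightarrow> (nat \<Rightarrow> int) \<Rightarrow> (nat \<Rightarrow> int) \<Rightarrow> int \<Rightarrow> complex" where
  "Phi r L n m = (THE phi. is_Phi r L n m phi)"

definition leval :: "(int \<Rightarrow> complex) \<Rightarrow> complex \<Rightarrow> complex" where
  "leval f z = (\<Sum>k\<in>{k. f k \<noteq> 0}. f k * z powi k)"

definition alpha :: "nat \<Rightarrow> (nat \<Rightarrow> int \<Rightarrow> complex) \<Rightarrow> (nat \<Rightarrow> int) \<Rightarrow> (nat \<Rightarrow> int) \<Rightarrow> complex" where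
  "alpha r L n m = Phi r L n m (- vabs r m)"

end

theory Submission
  imports Defs
begin

(* Substituting w + 1/w into a polynomial Q gives an even Laurent polynomial Q(w + 1/w), every even
   Laurent polynomial arises in this way, and M_j[Q(x) x^k] = L_j[(w + 1/w)^k Q(w + 1/w)].  Expanding
   (w + 1/w)^k binomially, M_j[Q(x) x^k] = 0 for k < n_j follows from L_j[Q(w + 1/w) w^s] = 0 for
   |s| < n_j.  As L_j is even, the even part Phi(z) + Phi(1/z) of Phi = Phi_{n;n}, or Phi = Phi_{n;n-e_j},
   inherits these conditions from Phi, so it is Q(z + 1/z) for a polynomial Q of degree |n| satisfying
   the orthogonality conditions of P_n, with leading coefficient 1 + alpha_{n;n}, resp. 1.
   Normality of (n + e_j; n) says L_j[Phi_{n;n}(w) w^(-n_j)] != 0, i.e. the Q built from Phi_{n;n}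
   violates the next condition M_j[Q(x) x^(n_j)] = 0.  By induction on |n| this shows that no nonzero
   polynomial of degree < |n| satisfies the conditions for n; hence P_n is unique and 1 + alpha_{n;n} != 0. *)

definition lsupp :: "(int \<Rightarrow> complex) \<Rightarrow> int set" where
  "lsupp f = {i. f i \<noteq> 0}"

definition lpair :: "(int \<Rightarrow> complex) \<Rightarrow> (int \<Rightarrow> complex) \<Rightarrow> complex" where
  "lpair f c = (\<Sum>i\<in>lsupp f. f i * c i)"

lemma lapp_eq_lpair: "lapp L j f = lpair f (L j)"
  by (simp add: lapp_def lpair_def lsupp_def)

lemma leval_eq_lpair: "leval f z = lpair f (\<lambda>i. z powi i)"
  by (simp add: leval_def lpair_def lsupp_def)

lemma lpair_eq_sum:
  assumes "finite A" "lsupp f \<subseteq> A"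
  shows "lpair f c = (\<Sum>i\<in>A. f i * c i)"
  unfolding lpair_def using assms by (intro sum.mono_neutral_left) (auto simp: lsupp_def)

lemma finite_lsupp_interval: "lsupp f \<subseteq> {a..b} \<Longrightarrow> finite (lsupp f)"
  using finite_subset by blast

lemma lsupp_shift: "lsupp (\<lambda>i. f (i + s)) = (\<lambda>i. i - s) ` lsupp f"
  by (force simp: lsupp_def)

lemma finite_lsupp_shift [simp]: "finite (lsupp (\<lambda>i. f (i + s))) \<longleftrightarrow> finite (lsupp f)"
  unfolding lsupp_shift by (simp add: finite_image_iff inj_on_def)

lemma lsupp_reflect: "lsupp (\<lambda>i. f (- i)) = uminus ` lsupp f"
  by (force simp: lsupp_def)

lemma finite_lsupp_reflect [simp]: "finite (lsupp (\<lambda>i. f (- i))) \<longleftrightarrow> finite (lsupp f)"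
  unfolding lsupp_reflect by (simp add: finite_image_iff)

lemma lpair_sum:
  assumes "finite I" "\<And>k. k \<in> I \<Longrightarrow> finite (lsupp (g k))"
  shows "lpair (\<lambda>i. \<Sum>k\<in>I. g k i) c = (\<Sum>k\<in>I. lpair (g k) c)"
proof -
  let ?A = "\<Union>k\<in>I. lsupp (g k)"
  have A: "finite ?A" "\<And>k. k \<in> I \<Longrightarrow> lsupp (g k) \<subseteq> ?A"
    using assms by auto
  have "lsupp (\<lambda>i. \<Sum>k\<in>I. g k i) \<subseteq> ?A"
    by (auto simp: lsupp_def intro: ccontr)
  then have "lpair (\<lambda>i. \<Sum>k\<in>I. g k i) c = (\<Sum>i\<in>?A. \<Sum>k\<in>I. g k i * c i)"
    using A by (simp add: lpair_eq_sum sum_distrib_right)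
  also have "\<dots> = (\<Sum>k\<in>I. lpair (g k) c)"
    using A by (subst sum.swap) (simp add: lpair_eq_sum)
  finally show ?thesis .
qed

lemma lpair_add:
  assumes "finite (lsupp f)" "finite (lsupp g)"
  shows "lpair (\<lambda>i. f i + g i) c = lpair f c + lpair g c"
  using lpair_sum[of "{True, False}" "\<lambda>k. if k then f else g" c] assms by simp

lemma lsupp_cmult_subset: "lsupp (\<lambda>i. a * f i) \<subseteq> lsupp f"
  by (auto simp: lsupp_def)

lemma lpair_cmult: "lpair (\<lambda>i. a * f i) c = a * lpair f c"
  by (cases "a = 0") (simp_all add: lpair_def lsupp_def sum_distrib_left mult.assoc)

lemma lpair_diff:
  assumes "finite (lsupp f)" "finite (lsupp g)"
  shows "lpair (\<lambda>i. f i - g i) c = lpair f c - lpair g c"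
  using lpair_add[of f "\<lambda>i. - 1 * g i" c] lpair_cmult[of "- 1" g c] assms
  by (simp add: lsupp_def)

lemma lpair_scale: "lpair f (\<lambda>i. a * c i) = a * lpair f c"
  by (simp add: lpair_def sum_distrib_left ac_simps)

lemma lpair_shift: "lpair (\<lambda>i. f (i + s)) c = lpair f (\<lambda>i. c (i - s))"
  unfolding lpair_def lsupp_shift by (simp add: sum.reindex inj_on_def)

lemma lpair_reflect: "lpair (\<lambda>i. f (- i)) c = lpair f (\<lambda>i. c (- i))"
  unfolding lpair_def lsupp_reflect by (simp add: sum.reindex)

definition wsym_mult :: "(int \<Rightarrow> complex) \<Rightarrow> int \<Rightarrow> complex" where
  "wsym_mult f = (\<lambda>i. f (i - 1) + f (i + 1))"

lemma wsym_pow_Suc: "wsym_pow (Suc k) = wsym_mult (wsym_pow k)"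
  by (simp add: wsym_mult_def)

declare wsym_pow.simps(2) [simp del]

lemma lsupp_wsym_mult:
  assumes "lsupp f \<subseteq> {a..b}"
  shows "lsupp (wsym_mult f) \<subseteq> {a - 1..b + 1}"
proof
  fix x assume "x \<in> lsupp (wsym_mult f)"
  then have "x - 1 \<in> lsupp f \<or> x + 1 \<in> lsupp f"
    by (auto simp: lsupp_def wsym_mult_def)
  then show "x \<in> {a - 1..b + 1}"
    using assms by auto
qed

lemma lsupp_wsym_pow: "lsupp (wsym_pow k) \<subseteq> {- int k..int k}"
proof (induction k)
  case 0
  show ?case by (simp add: lsupp_def)
next
  case (Suc k)
  have "{- int k - 1..int k + 1} = {- int (Suc k)..int (Suc k)}"
    by simp
  with lsupp_wsym_mult[OF Suc.IH] show ?case
    by (simp add: wsym_pow_Suc)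
qed

lemma finite_lsupp_wsym_pow [simp]: "finite (lsupp (wsym_pow k))"
  by (rule finite_lsupp_interval[OF lsupp_wsym_pow])

lemma wsym_pow_even: "wsym_pow k (- t) = wsym_pow k t"
proof (induction k arbitrary: t)
  case (Suc k)
  have "- t - 1 = - (t + 1)" "- t + 1 = - (t - 1)"
    by simp_all
  then show ?case
    by (simp only: wsym_pow_Suc wsym_mult_def Suc.IH) simp
qed simp

lemma wsym_pow_top: "wsym_pow k (int k) = 1"
proof (induction k)
  case (Suc k)
  have "int k + 2 \<notin> lsupp (wsym_pow k)"
    using lsupp_wsym_pow[of k] by auto
  then have "wsym_pow k (int k + 2) = 0"
    by (simp add: lsupp_def)
  then show ?case
    using Suc by (simp add: wsym_pow_Suc wsym_mult_def add_ac)
qed simp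

lemma sum_pascal:
  fixes g :: "nat \<Rightarrow> 'a::comm_semiring_1"
  shows "(\<Sum>i\<le>Suc k. of_nat (Suc k choose i) * g i) =
         (\<Sum>i\<le>k. of_nat (k choose i) * g i) + (\<Sum>i\<le>k. of_nat (k choose i) * g (Suc i))"
proof -
  have "(\<Sum>i\<le>k. of_nat (k choose i) * g i) = (\<Sum>i\<le>Suc k. of_nat (k choose i) * g i)"
    by (simp add: binomial_eq_0)
  also have "\<dots> = g 0 + (\<Sum>i\<le>k. of_nat (k choose Suc i) * g (Suc i))"
    by (subst sum.atMost_Suc_shift) simp
  finally show ?thesis
    by (subst sum.atMost_Suc_shift) (simp add: sum.distrib distrib_right add_ac)
qed

lemma wsym_mult_pow_eq_binomial:
  "(wsym_mult ^^ k) f t = (\<Sum>i\<le>k. of_nat (k choose i) * f (t + (2 * int i - int k)))"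
proof (induction k arbitrary: t)
  case (Suc k)
  let ?g = "\<lambda>i. f (t + (2 * int i - int k - 1))"
  have "(wsym_mult ^^ Suc k) f t = (wsym_mult ^^ k) f (t - 1) + (wsym_mult ^^ k) f (t + 1)"
    by (simp add: wsym_mult_def)
  also have "\<dots> = (\<Sum>i\<le>k. of_nat (k choose i) * ?g i) + (\<Sum>i\<le>k. of_nat (k choose i) * ?g (Suc i))"
    by (simp add: Suc.IH algebra_simps)
  also have "\<dots> = (\<Sum>i\<le>Suc k. of_nat (Suc k choose i) * ?g i)"
    by (rule sum_pascal[symmetric])
  finally show ?case by (simp add: algebra_simps)
qed simp

lemma lapp_wsym_mult_pow:
  assumes "finite (lsupp f)"
  shows "lapp L j ((wsym_mult ^^ k) f) =
    (\<Sum>i\<le>k. of_nat (k choose i) * lapp L j (\<lambda>t. f (t + (2 * int i - int k))))"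
proof -
  have fin: "finite (lsupp (\<lambda>t. of_nat (k choose i) * f (t + s)))" for i s
    by (rule finite_subset[OF lsupp_cmult_subset]) (simp add: assms)
  have "(wsym_mult ^^ k) f = (\<lambda>t. \<Sum>i\<le>k. of_nat (k choose i) * f (t + (2 * int i - int k)))"
    by (rule ext) (rule wsym_mult_pow_eq_binomial)
  then have "lapp L j ((wsym_mult ^^ k) f) =
      (\<Sum>i\<le>k. lpair (\<lambda>t. of_nat (k choose i) * f (t + (2 * int i - int k))) (L j))"
    unfolding lapp_eq_lpair by (simp only:) (rule lpair_sum, simp_all only: fin finite_atMost)
  then show ?thesis
    by (simp only: lpair_cmult lapp_eq_lpair)
qed

lemma lapp_wsym_mult_pow_eq_0:
  assumes "finite (lsupp f)" and "\<And>s. \<bar>s\<bar> \<le> int k \<Longrightarrow> lapp L j (\<lambda>t. f (t + s)) = 0"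
  shows "lapp L j ((wsym_mult ^^ k) f) = 0"
  using assms by (simp add: lapp_wsym_mult_pow)

lemma lapp_wsym_mult_pow_edge:
  assumes "finite (lsupp f)" and "k \<ge> 1"
    and "\<And>s. \<bar>s\<bar> < int k \<Longrightarrow> lapp L j (\<lambda>t. f (t + s)) = 0"
  shows "lapp L j ((wsym_mult ^^ k) f) = lapp L j (\<lambda>t. f (t - int k)) + lapp L j (\<lambda>t. f (t + int k))"
proof -
  let ?g = "\<lambda>i. of_nat (k choose i) * lapp L j (\<lambda>t. f (t + (2 * int i - int k)))"
  have "?g i = 0" if "i \<in> {..k} - {0, k}" for i
  proof -
    from that have "\<bar>2 * int i - int k\<bar> < int k"
      by auto
    then show ?thesis
      by (simp add: assms(3))
  qed
  then have "(\<Sum>i\<le>k. ?g i) = (\<Sum>i\<in>{0, k}. ?g i)"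
    by (intro sum.mono_neutral_right) auto
  also have "\<dots> = lapp L j (\<lambda>t. f (t - int k)) + lapp L j (\<lambda>t. f (t + int k))"
    using assms(2) by simp
  finally show ?thesis by (simp add: lapp_wsym_mult_pow assms(1))
qed

lemma leval_shift:
  assumes "z \<noteq> 0"
  shows "leval (\<lambda>i. f (i + s)) z = z powi (- s) * leval f z"
proof -
  have "z powi (i - s) = z powi (- s) * z powi i" for i
    by (metis assms diff_conv_add_uminus add.commute power_int_add)
  then show ?thesis
    unfolding leval_eq_lpair lpair_shift by (simp add: lpair_scale)
qed

lemma leval_wsym_mult:
  assumes "finite (lsupp f)" and "z \<noteq> 0"
  shows "leval (wsym_mult f) z = (z + 1 / z) * leval f z"
proof -
  have fin: "finite (lsupp (\<lambda>i. f (i - 1)))" "finite (lsupp (\<lambda>i. f (i + 1)))"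
    using assms(1) finite_lsupp_shift[of f "- 1"] by simp_all
  have "leval (wsym_mult f) z = leval (\<lambda>i. f (i - 1)) z + leval (\<lambda>i. f (i + 1)) z"
    unfolding leval_eq_lpair wsym_mult_def by (rule lpair_add[OF fin])
  also have "\<dots> = (z + 1 / z) * leval f z"
    using leval_shift[OF assms(2), of f "- 1"] leval_shift[OF assms(2), of f 1]
    by (simp add: power_int_minus field_simps)
  finally show ?thesis .
qed

lemma leval_wsym_pow: "z \<noteq> 0 \<Longrightarrow> leval (wsym_pow k) z = (z + 1 / z) ^ k"
proof (induction k)
  case 0
  have "{i. wsym_pow 0 i \<noteq> 0} = {0}"
    by auto
  then show ?case
    by (simp add: leval_def)
next
  case (Suc k)
  then show ?case
    by (simp add: wsym_pow_Suc leval_wsym_mult finite_lsupp_interval[OF lsupp_wsym_pow])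
qed

lemma lpair_even_part_shift:
  assumes "\<And>t. c (- t) = c t" and "finite (lsupp f)"
  shows "lpair (\<lambda>t. f (t + s) + f (- (t + s))) c = lpair (\<lambda>t. f (t + s)) c + lpair (\<lambda>t. f (t - s)) c"
proof -
  have "finite (lsupp (\<lambda>t. f (- (t + s))))"
    using assms(2) finite_lsupp_shift[of "\<lambda>u. f (- u)" s] by simp
  then have "lpair (\<lambda>t. f (t + s) + f (- (t + s))) c = lpair (\<lambda>t. f (t + s)) c + lpair (\<lambda>t. f (- (t + s))) c"
    using assms(2) by (simp add: lpair_add)
  also have "lpair (\<lambda>t. f (- (t + s))) c = lpair (\<lambda>t. f (t - s)) c"
    using lpair_reflect[of "\<lambda>t. f (t - s)" c] assms(1) by simp
  finally show ?thesis .
qed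

lemma lsupp_even_part:
  assumes "lsupp f \<subseteq> {- N..N}"
  shows "lsupp (\<lambda>t. f t + f (- t)) \<subseteq> {- N..N}"
proof
  fix t assume "t \<in> lsupp (\<lambda>t. f t + f (- t))"
  then have "t \<in> lsupp f \<or> - t \<in> lsupp f"
    by (auto simp: lsupp_def)
  with assms show "t \<in> {- N..N}"
    by auto
qed

lemma leval_even_part:
  assumes "finite (lsupp f)"
  shows "leval (\<lambda>t. f t + f (- t)) z = leval f z + leval f (1 / z)"
proof -
  have "(1 / z) powi i = z powi (- i)" for i
    by (simp add: power_int_minus power_int_divide_distrib inverse_eq_divide)
  then show ?thesis
    using assms by (simp add: leval_eq_lpair lpair_add lpair_reflect)
qed

definition poly_wsym :: "complex poly \<Rightarrow> int \<Rightarrow> complex" where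
  "poly_wsym Q = (\<lambda>t. \<Sum>i\<le>degree Q. coeff Q i * wsym_pow i t)"

lemma poly_wsym_eq_sum: "degree Q \<le> N \<Longrightarrow> poly_wsym Q t = (\<Sum>i\<le>N. coeff Q i * wsym_pow i t)"
  unfolding poly_wsym_def by (rule sum.mono_neutral_left) (auto simp: coeff_eq_0)

lemma poly_wsym_add: "poly_wsym (P + Q) t = poly_wsym P t + poly_wsym Q t"
  using poly_wsym_eq_sum[of P "max (degree P) (degree Q)"] poly_wsym_eq_sum[of Q "max (degree P) (degree Q)"]
    poly_wsym_eq_sum[of "P + Q" "max (degree P) (degree Q)"]
  by (simp add: degree_add_le sum.distrib distrib_right)

lemma poly_wsym_monom: "poly_wsym (monom c k) t = c * wsym_pow k t"
proof -
  have "(\<Sum>i\<le>k. coeff (monom c k) i * wsym_pow i t) = (\<Sum>i\<le>k. if i = k then c * wsym_pow k t else 0)"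
    by (rule sum.cong) (auto simp: coeff_monom)
  then show ?thesis
    by (simp add: poly_wsym_eq_sum[of _ k] degree_monom_le)
qed

lemma poly_wsym_pCons_0: "poly_wsym (pCons 0 Q) = wsym_mult (poly_wsym Q)"
proof
  fix t
  have "poly_wsym (pCons 0 Q) t = (\<Sum>i\<le>Suc (degree Q). coeff (pCons 0 Q) i * wsym_pow i t)"
    by (rule poly_wsym_eq_sum) (simp add: degree_pCons_le)
  also have "\<dots> = (\<Sum>i\<le>degree Q. coeff Q i * wsym_pow i (t - 1)) + (\<Sum>i\<le>degree Q. coeff Q i * wsym_pow i (t + 1))"
    by (subst sum.atMost_Suc_shift) (simp add: sum.distrib distrib_left wsym_pow_Suc wsym_mult_def)
  finally show "poly_wsym (pCons 0 Q) t = wsym_mult (poly_wsym Q) t"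
    by (simp add: wsym_mult_def poly_wsym_def)
qed

lemma poly_wsym_mult_monom: "poly_wsym (Q * monom 1 k) = (wsym_mult ^^ k) (poly_wsym Q)"
proof (induction k)
  case (Suc k)
  have "Q * monom 1 (Suc k) = pCons 0 (Q * monom 1 k)"
    by (simp add: monom_Suc mult_pCons_right)
  then show ?case
    using Suc by (simp add: poly_wsym_pCons_0)
qed (simp add: one_pCons)

lemma lsupp_poly_wsym:
  assumes "degree Q \<le> N"
  shows "lsupp (poly_wsym Q) \<subseteq> {- int N..int N}"
proof
  fix t assume "t \<in> lsupp (poly_wsym Q)"
  then have "(\<Sum>i\<le>N. coeff Q i * wsym_pow i t) \<noteq> 0"
    by (simp add: lsupp_def poly_wsym_eq_sum[OF assms])
  then obtain i where "i \<le> N" "t \<in> lsupp (wsym_pow i)"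
    by (metis (mono_tags, lifting) atMost_iff lsupp_def mem_Collect_eq mult_zero_right sum.neutral)
  then show "t \<in> {- int N..int N}"
    using lsupp_wsym_pow[of i] by auto
qed

lemma finite_lsupp_poly_wsym [simp]: "finite (lsupp (poly_wsym Q))"
  by (rule finite_lsupp_interval[OF lsupp_poly_wsym[OF order.refl]])

lemma poly_wsym_top:
  assumes "degree Q \<le> N"
  shows "poly_wsym Q (int N) = coeff Q N"
proof -
  have "wsym_pow i (int N) = (if i = N then 1 else 0)" if "i \<le> N" for i
  proof (cases "i = N")
    case False
    with that have "int N \<notin> lsupp (wsym_pow i)"
      using lsupp_wsym_pow[of i] by auto
    with False show ?thesis
      by (simp add: lsupp_def)
  qed (simp add: wsym_pow_top)
  then have "(\<Sum>i\<le>N. coeff Q i * wsym_pow i (int N)) = (\<Sum>i\<le>N. if i = N then coeff Q N else 0)"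
    by (intro sum.cong) auto
  then show ?thesis
    by (simp add: poly_wsym_eq_sum[OF assms])
qed

lemma lpair_poly_wsym: "lpair (poly_wsym Q) c = (\<Sum>i\<le>degree Q. coeff Q i * lpair (wsym_pow i) c)"
proof -
  have "finite (lsupp (\<lambda>t. coeff Q i * wsym_pow i t))" for i
    by (rule finite_subset[OF lsupp_cmult_subset]) simp
  then show ?thesis
    unfolding poly_wsym_def by (simp add: lpair_sum lpair_cmult)
qed

lemma mapp_Mmom_eq_lapp: "mapp (Mmom L) j Q = lapp L j (poly_wsym Q)"
  by (simp add: mapp_def Mmom_def lapp_eq_lpair lpair_poly_wsym)

lemma mapp_Mmom_mult_monom: "mapp (Mmom L) j (Q * monom 1 k) = lapp L j ((wsym_mult ^^ k) (poly_wsym Q))"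
  by (simp add: mapp_Mmom_eq_lapp poly_wsym_mult_monom)

lemma leval_poly_wsym: "z \<noteq> 0 \<Longrightarrow> leval (poly_wsym Q) z = poly Q (z + 1 / z)"
  by (simp add: leval_eq_lpair lpair_poly_wsym leval_wsym_pow[symmetric] poly_altdef)

lemma even_eq_poly_wsym:
  assumes "lsupp S \<subseteq> {- int N..int N}" and "\<And>t. S (- t) = S t"
  shows "\<exists>Q. degree Q \<le> N \<and> poly_wsym Q = S"
  using assms
proof (induction N arbitrary: S)
  case 0
  then have "S t = 0" if "t \<noteq> 0" for t
    using that by (auto simp: lsupp_def)
  then have "S = poly_wsym [:S 0:]"
    by (intro ext) (auto simp: poly_wsym_def)
  then show ?case
    by (metis degree_pCons_0 order.refl)
next
  case (Suc N)
  define c where "c = S (int (Suc N))"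
  define S' where "S' = (\<lambda>t. S t - c * wsym_pow (Suc N) t)"
  have even: "S' (- t) = S' t" for t
    using Suc.prems(2) by (simp add: S'_def wsym_pow_even)
  have "S' (int (Suc N)) = 0"
    using wsym_pow_top[of "Suc N"] by (simp add: S'_def c_def)
  then have ends: "int (Suc N) \<notin> lsupp S'" "- int (Suc N) \<notin> lsupp S'"
    using even[of "int (Suc N)"] by (simp_all add: lsupp_def)
  have "lsupp S' \<subseteq> lsupp S \<union> lsupp (wsym_pow (Suc N))"
    by (auto simp: S'_def lsupp_def)
  then have "lsupp S' \<subseteq> {- int (Suc N)..int (Suc N)}"
    using Suc.prems(1) lsupp_wsym_pow[of "Suc N"] by blast
  have "lsupp S' \<subseteq> {- int N..int N}"
  proof
    fix t assume t: "t \<in> lsupp S'"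
    with \<open>lsupp S' \<subseteq> {- int (Suc N)..int (Suc N)}\<close> have "- int (Suc N) \<le> t" "t \<le> int (Suc N)"
      by auto
    moreover from t ends have "t \<noteq> int (Suc N)" "t \<noteq> - int (Suc N)"
      by auto
    ultimately show "t \<in> {- int N..int N}"
      by auto
  qed
  then obtain Q where Q: "degree Q \<le> N" "poly_wsym Q = S'"
    using Suc.IH even by blast
  have "degree (Q + monom c (Suc N)) \<le> Suc N"
    using Q(1) by (meson degree_add_le degree_monom_le le_SucI)
  moreover have "poly_wsym (Q + monom c (Suc N)) = S"
    using Q(2) by (auto simp: poly_wsym_add poly_wsym_monom S'_def)
  ultimately show ?case
    by blast
qed

definition even_part_poly :: "nat \<Rightarrow> (int \<Rightarrow> complex) \<Rightarrow> complex poly" where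
  "even_part_poly N phi = (SOME Q. degree Q \<le> N \<and> poly_wsym Q = (\<lambda>t. phi t + phi (- t)))"

lemma even_part_poly:
  assumes "lsupp phi \<subseteq> {- int N..int N}"
  shows "degree (even_part_poly N phi) \<le> N"
    and "poly_wsym (even_part_poly N phi) = (\<lambda>t. phi t + phi (- t))"
proof -
  have "\<exists>Q. degree Q \<le> N \<and> poly_wsym Q = (\<lambda>t. phi t + phi (- t))"
    using lsupp_even_part[OF assms] by (intro even_eq_poly_wsym) simp_all
  then show "degree (even_part_poly N phi) \<le> N" "poly_wsym (even_part_poly N phi) = (\<lambda>t. phi t + phi (- t))"
    unfolding even_part_poly_def by (metis (mono_tags, lifting) someI_ex)+
qed

lemma coeff_even_part_poly:
  "lsupp phi \<subseteq> {- int N..int N} \<Longrightarrow> coeff (even_part_poly N phi) N = phi (int N) + phi (- int N)"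
  using poly_wsym_top[OF even_part_poly(1)] by (simp add: even_part_poly(2))

lemma poly_even_part_poly:
  "lsupp phi \<subseteq> {- int N..int N} \<Longrightarrow> z \<noteq> 0 \<Longrightarrow>
    poly (even_part_poly N phi) (z + 1 / z) = leval phi z + leval phi (1 / z)"
  by (simp add: leval_poly_wsym[symmetric] even_part_poly(2) leval_even_part finite_lsupp_interval)

lemma set_Trows: "set (Trows r n m) = {(j, k). j < r \<and> - m j \<le> k \<and> k \<le> n j - 1}"
  unfolding Trows_def by auto

lemma length_Trows:
  assumes "\<forall>j<r. n j + m j \<ge> 0"
  shows "length (Trows r n m) = nat (vabs r n + vabs r m)"
proof -
  have "length (Trows r n m) = (\<Sum>j\<in>{0..<r}. nat (n j + m j))"
    unfolding Trows_def length_concat map_map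
    by (subst sum_list_distinct_conv_sum_set) (auto simp: o_def algebra_simps)
  also have "\<dots> = nat (\<Sum>j\<in>{0..<r}. n j + m j)"
  proof -
    have "int (\<Sum>j\<in>{0..<r}. nat (n j + m j)) = (\<Sum>j\<in>{0..<r}. n j + m j)"
      using assms by (simp add: of_nat_sum)
    then show ?thesis
      by linarith
  qed
  finally show ?thesis
    by (simp add: vabs_def sum.distrib atLeast0LessThan)
qed

lemma Tmat_carrier: "Tmat r L n m \<in> carrier_mat (nat (vabs r n + vabs r m)) (nat (vabs r n + vabs r m))"
  unfolding Tmat_def Let_def by simp

lemma Tmat_mult_vec:
  assumes "p < nat (vabs r n + vabs r m)" and "Trows r n m ! p = (j, k)"
    and "lsupp f \<subseteq> {- vabs r m..vabs r n - 1}"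
  shows "(Tmat r L n m *\<^sub>v vec (nat (vabs r n + vabs r m)) (\<lambda>q. f (int q - vabs r m))) $ p
       = lapp L j (\<lambda>i. f (i + k))"
proof -
  define A where "A = vabs r m"
  define N where "N = nat (vabs r n + A)"
  have "(Tmat r L n m *\<^sub>v vec N (\<lambda>q. f (int q - A))) $ p
      = (\<Sum>q\<in>{0..<N}. cc L (k - (int q - A)) j * f (int q - A))"
    using assms(1,2) unfolding Tmat_def Let_def A_def N_def by (simp add: scalar_prod_def)
  also have "\<dots> = (\<Sum>l\<in>{- A..vabs r n - 1}. f l * L j (l - k))"
    by (rule sum.reindex_bij_witness[where i = "\<lambda>l. nat (l + A)" and j = "\<lambda>q. int q - A"])
      (auto simp: N_def cc_def)
  also have "\<dots> = lapp L j (\<lambda>i. f (i + k))"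
    using assms(3) lpair_eq_sum[of "{- A..vabs r n - 1}" f]
    by (simp add: A_def lapp_eq_lpair lpair_shift)
  finally show ?thesis
    unfolding A_def N_def .
qed

lemma lnormal_kernel_trivial:
  assumes "lnormal r L n m"
    and f: "lsupp f \<subseteq> {- vabs r m..vabs r n - 1}"
    and orth: "\<And>j k. j < r \<Longrightarrow> - m j \<le> k \<Longrightarrow> k \<le> n j - 1 \<Longrightarrow> lapp L j (\<lambda>i. f (i + k)) = 0"
  shows "f = (\<lambda>_. 0)"
proof -
  define A where "A = vabs r m"
  define N where "N = nat (vabs r n + A)"
  define v where "v = vec N (\<lambda>q. f (int q - A))"
  have nonneg: "\<forall>j<r. n j + m j \<ge> 0" and det: "det (Tmat r L n m) \<noteq> 0"
    using assms(1) unfolding lnormal_def by auto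
  have len: "length (Trows r n m) = N"
    using length_Trows[OF nonneg] by (simp add: N_def A_def)
  have carrier: "Tmat r L n m \<in> carrier_mat N N"
    using Tmat_carrier by (simp add: N_def A_def)
  have "Tmat r L n m *\<^sub>v v = 0\<^sub>v N"
  proof (rule eq_vecI)
    fix p assume "p < dim_vec (0\<^sub>v N)"
    then have p: "p < N"
      by simp
    obtain j k where jk: "Trows r n m ! p = (j, k)"
      by fastforce
    then have "(j, k) \<in> set (Trows r n m)"
      using p len by (metis nth_mem)
    then have "j < r" "- m j \<le> k" "k \<le> n j - 1"
      unfolding set_Trows by auto
    then show "(Tmat r L n m *\<^sub>v v) $ p = 0\<^sub>v N $ p"
      using Tmat_mult_vec[OF _ jk f, of L] p orth by (simp add: v_def N_def A_def)
  qed (use carrier in simp)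
  moreover have "v \<in> carrier_vec N"
    by (simp add: v_def)
  ultimately have "v = 0\<^sub>v N"
    using det_0_iff_vec_prod_zero[OF carrier] det by blast
  show ?thesis
  proof
    fix i
    show "f i = 0"
    proof (rule ccontr)
      assume "f i \<noteq> 0"
      with f have "nat (i + A) < N" "- A \<le> i"
        by (auto simp: lsupp_def N_def A_def)
      then have "v $ nat (i + A) = f i"
        by (simp add: v_def)
      with \<open>f i \<noteq> 0\<close> \<open>v = 0\<^sub>v N\<close> \<open>nat (i + A) < N\<close> show False
        by simp
    qed
  qed
qed

lemma lnormal_solvable:
  assumes "lnormal r L n m"
  obtains f where "lsupp f \<subseteq> {- vabs r m..vabs r n - 1}"
    and "\<And>j k. j < r \<Longrightarrow> - m j \<le> k \<Longrightarrow> k \<le> n j - 1 \<Longrightarrow>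
           lapp L j (\<lambda>i. f (i + k)) = - L j (vabs r n - k)"
proof -
  define A where "A = vabs r m"
  define N where "N = nat (vabs r n + A)"
  have nonneg: "\<forall>j<r. n j + m j \<ge> 0" and det: "det (Tmat r L n m) \<noteq> 0"
    using assms unfolding lnormal_def by auto
  have len: "length (Trows r n m) = N"
    using length_Trows[OF nonneg] by (simp add: N_def A_def)
  have carrier: "Tmat r L n m \<in> carrier_mat N N"
    using Tmat_carrier by (simp add: N_def A_def)
  have "Tmat r L n m \<in> Units (ring_mat TYPE(complex) N ())"
    by (rule det_non_zero_imp_unit[OF carrier det])
  then obtain Ti where Ti: "Ti \<in> carrier_mat N N" "Tmat r L n m * Ti = 1\<^sub>m N"
    unfolding Units_def ring_mat_def by auto
  define b where "b = vec N (\<lambda>p. case Trows r n m ! p of (j, k) \<Rightarrow> - L j (vabs r n - k))"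
  define f where "f = (\<lambda>i. if - A \<le> i \<and> i \<le> vabs r n - 1 then (Ti *\<^sub>v b) $ nat (i + A) else 0)"
  have supp: "lsupp f \<subseteq> {- vabs r m..vabs r n - 1}"
    by (auto simp: lsupp_def f_def A_def)
  have "vec N (\<lambda>q. f (int q - A)) = Ti *\<^sub>v b"
    by (rule eq_vecI) (use Ti(1) in \<open>auto simp: f_def N_def\<close>)
  then have Tf: "Tmat r L n m *\<^sub>v vec N (\<lambda>q. f (int q - A)) = b"
    using Ti carrier by (simp add: assoc_mult_mat_vec[symmetric] b_def)
  show thesis
  proof (rule that[OF supp])
    fix j k assume "j < r" "- m j \<le> k" "k \<le> n j - 1"
    then have "(j, k) \<in> set (Trows r n m)"
      unfolding set_Trows by auto
    then obtain p where p: "p < N" "Trows r n m ! p = (j, k)"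
      using len by (metis in_set_conv_nth)
    then show "lapp L j (\<lambda>i. f (i + k)) = - L j (vabs r n - k)"
      using Tmat_mult_vec[OF _ p(2) supp, of L] Tf by (simp add: b_def N_def A_def)
  qed
qed

lemma lsupp_is_Phi: "is_Phi r L n m phi \<Longrightarrow> lsupp phi \<subseteq> {- vabs r m..vabs r n}"
  by (auto simp: is_Phi_def lsupp_def)

lemma lpair_delta: "lpair (\<lambda>i. if i = a then 1 else 0) c = c a"
proof -
  have "lsupp (\<lambda>i. if i = a then 1 else 0 :: complex) = {a}"
    by (auto simp: lsupp_def)
  then show ?thesis
    by (simp add: lpair_def)
qed

lemma is_Phi_exists:
  assumes "lnormal r L n m"
  shows "\<exists>phi. is_Phi r L n m phi"
proof -
  obtain f where supp: "lsupp f \<subseteq> {- vabs r m..vabs r n - 1}"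
    and f: "\<And>j k. j < r \<Longrightarrow> - m j \<le> k \<Longrightarrow> k \<le> n j - 1 \<Longrightarrow>
              lapp L j (\<lambda>i. f (i + k)) = - L j (vabs r n - k)"
    using lnormal_solvable[OF assms] by blast
  define delta :: "int \<Rightarrow> complex" where "delta = (\<lambda>i. if i = vabs r n then 1 else 0)"
  define phi where "phi = (\<lambda>i. f i + delta i)"
  have "0 \<le> (\<Sum>j<r. n j + m j)"
    using assms unfolding lnormal_def by (intro sum_nonneg) auto
  then have "- vabs r m \<le> vabs r n"
    by (simp add: vabs_def sum.distrib)
  then have "\<forall>k. phi k \<noteq> 0 \<longrightarrow> - vabs r m \<le> k \<and> k \<le> vabs r n"
    using supp by (force simp: phi_def delta_def lsupp_def)
  moreover have "phi (vabs r n) = 1"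
    using supp by (force simp: phi_def delta_def lsupp_def)
  moreover have "lapp L j (\<lambda>i. phi (i + k)) = 0" if "j < r" "- m j \<le> k" "k \<le> n j - 1" for j k
  proof -
    have "finite (lsupp delta)"
      by (simp add: delta_def lsupp_def)
    then have "lapp L j (\<lambda>i. phi (i + k)) = lapp L j (\<lambda>i. f (i + k)) + lpair delta (\<lambda>i. L j (i - k))"
      using finite_lsupp_interval[OF supp]
      by (simp add: phi_def lapp_eq_lpair lpair_add lpair_shift)
    also have "\<dots> = 0"
      using f[OF that] by (simp add: delta_def lpair_delta)
    finally show ?thesis .
  qed
  ultimately show ?thesis
    unfolding is_Phi_def by blast
qed

lemma is_Phi_unique:
  assumes "lnormal r L n m" and phi: "is_Phi r L n m phi" and psi: "is_Phi r L n m psi"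
  shows "phi = psi"
proof -
  have fin: "finite (lsupp phi)" "finite (lsupp psi)"
    using finite_lsupp_interval[OF lsupp_is_Phi] phi psi by blast+
  have "(\<lambda>i. phi i - psi i) = (\<lambda>_. 0)"
  proof (rule lnormal_kernel_trivial[OF assms(1)])
    show "lsupp (\<lambda>i. phi i - psi i) \<subseteq> {- vabs r m..vabs r n - 1}"
      using phi psi unfolding is_Phi_def lsupp_def
      by (smt (verit, best) mem_Collect_eq atLeastAtMost_iff subsetI eq_iff_diff_eq_0)
    fix j k assume "j < r" "- m j \<le> k" "k \<le> n j - 1"
    then show "lapp L j (\<lambda>i. phi (i + k) - psi (i + k)) = 0"
      using phi psi fin by (simp add: is_Phi_def lapp_eq_lpair lpair_diff)
  qed
  then show ?thesis
    by (simp add: fun_eq_iff)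
qed

lemma is_Phi_Phi:
  assumes "lnormal r L n m"
  shows "is_Phi r L n m (Phi r L n m)"
proof -
  have "\<exists>!phi. is_Phi r L n m phi"
    using is_Phi_exists[OF assms] is_Phi_unique[OF assms] by blast
  then show ?thesis
    unfolding Phi_def by (rule theI')
qed

lemma sum_fun_upd_Suc:
  fixes n :: "nat \<Rightarrow> nat"
  assumes "j < r"
  shows "(\<Sum>i<r. (n(j := n j + 1)) i) = Suc (\<Sum>i<r. n i)"
proof -
  have "(\<Sum>i<r. (n(j := n j + 1)) i) = (\<Sum>i<r. n i + (if i = j then 1 else 0))"
    by (rule sum.cong) auto
  then show ?thesis
    using assms by (simp add: sum.distrib)
qed

lemma vabs_of_nat: "vabs r (\<lambda>i. int (n i)) = int (\<Sum>j<r. n j)"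
  by (simp add: vabs_def)

lemma multi_index_induct [consumes 1, case_names zero step]:
  fixes n :: "nat \<Rightarrow> nat"
  assumes "\<forall>i\<ge>r. n i = 0"
    and zero: "P (\<lambda>_. 0)"
    and step: "\<And>n j. \<forall>i\<ge>r. n i = 0 \<Longrightarrow> j < r \<Longrightarrow> P n \<Longrightarrow> P (n(j := n j + 1))"
  shows "P n"
proof -
  have "P n" if "\<forall>i\<ge>r. n i = 0" "(\<Sum>j<r. n j) = s" for n s
    using that
  proof (induction s arbitrary: n)
    case 0
    then have "n = (\<lambda>_. 0)"
      by (metis lessThan_iff not_le sum_eq_0_iff finite_lessThan)
    with zero show ?case
      by simp
  next
    case (Suc s)
    then obtain j where j: "j < r" "n j \<noteq> 0"
      by (metis lessThan_iff nat.distinct(1) sum.neutral)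
    define n' where "n' = n(j := n j - 1)"
    have n: "n = n'(j := n' j + 1)"
      using j by (auto simp: n'_def)
    have "\<forall>i\<ge>r. n' i = 0"
      using Suc.prems(1) j by (simp add: n'_def)
    moreover have "(\<Sum>i<r. n' i) = s"
      using Suc.prems(2) sum_fun_upd_Suc[OF j(1), of n'] n by simp
    ultimately show ?case
      using Suc.IH step[OF _ j(1)] n by metis
  qed
  with assms(1) show ?thesis
    by blast
qed

definition mult_orth :: "nat \<Rightarrow> (nat \<Rightarrow> nat \<Rightarrow> complex) \<Rightarrow> (nat \<Rightarrow> nat) \<Rightarrow> complex poly \<Rightarrow> bool" where
  "mult_orth r M n P \<longleftrightarrow> (\<forall>j<r. \<forall>k<n j. mapp M j (P * monom 1 k) = 0)"

lemma is_mop_iff: "is_mop r M n P \<longleftrightarrow> degree P = (\<Sum>j<r. n j) \<and> lead_coeff P = 1 \<and> mult_orth r M n P"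
  by (simp add: is_mop_def mult_orth_def)

lemma mapp_eq_sum: "degree p \<le> N \<Longrightarrow> mapp M j p = (\<Sum>i\<le>N. coeff p i * M j i)"
  unfolding mapp_def by (rule sum.mono_neutral_left) (auto simp: coeff_eq_0)

lemma mapp_lincomb: "mapp M j (smult a p - smult b q) = a * mapp M j p - b * mapp M j q"
proof -
  define N where "N = max (degree p) (degree q)"
  have "degree (smult a p - smult b q) \<le> N"
    unfolding N_def by (meson degree_diff_le degree_smult_le le_trans max.cobounded1 max.cobounded2)
  then show ?thesis
    using mapp_eq_sum[of p N M j] mapp_eq_sum[of q N M j] mapp_eq_sum[of "smult a p - smult b q" N M j]
    by (simp add: N_def sum_subtractf sum_distrib_left algebra_simps)
qed

lemma mapp_lincomb_mult_monom:
  "mapp M j ((smult a p - smult b q) * monom 1 k) = a * mapp M j (p * monom 1 k) - b * mapp M j (q * monom 1 k)"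
  by (simp add: left_diff_distrib mapp_lincomb[symmetric])

lemma mult_orth_lincomb:
  "mult_orth r M n p \<Longrightarrow> mult_orth r M n q \<Longrightarrow> mult_orth r M n (smult a p - smult b q)"
  by (simp add: mult_orth_def mapp_lincomb_mult_monom)

lemma mult_orth_diff: "mult_orth r M n p \<Longrightarrow> mult_orth r M n q \<Longrightarrow> mult_orth r M n (p - q)"
  using mult_orth_lincomb[of r M n p q 1 1] by simp

lemma mult_orth_fun_upd_Suc:
  assumes "j < r"
  shows "mult_orth r M (n(j := n j + 1)) D \<longleftrightarrow> mult_orth r M n D \<and> mapp M j (D * monom 1 (n j)) = 0"
  using assms unfolding mult_orth_def by (auto simp: less_Suc_eq)

lemma mult_orth_poly_wsym:
  assumes "\<And>i s. i < r \<Longrightarrow> \<bar>s\<bar> \<le> int (n i) - 1 \<Longrightarrow> lapp L i (\<lambda>t. poly_wsym Q (t + s)) = 0"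
  shows "mult_orth r (Mmom L) n Q"
  unfolding mult_orth_def mapp_Mmom_mult_monom
  using assms by (auto intro!: lapp_wsym_mult_pow_eq_0)

locale symmetric_normal_system =
  fixes r :: nat and L :: "nat \<Rightarrow> int \<Rightarrow> complex"
  assumes r_pos: "r \<ge> 1"
    and L_sym: "\<forall>j<r. \<forall>k::nat. L j (int k) = L j (- int k)"
    and lnormal_diag: "\<And>n. \<forall>i\<ge>r. n i = 0 \<Longrightarrow> lnormal r L (\<lambda>i. int (n i)) (\<lambda>i. int (n i))"
    and lnormal_step: "\<And>n j. \<forall>i\<ge>r. n i = 0 \<Longrightarrow> j < r \<Longrightarrow>
      lnormal r L (\<lambda>i. int ((n(j := n j + 1)) i)) (\<lambda>i. int (n i))"
begin

lemma L_even: "j < r \<Longrightarrow> L j (- t) = L j t"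
  using L_sym by (cases t rule: int_cases2) auto

lemma lapp_even_part_shift:
  assumes "j < r" and "finite (lsupp f)"
  shows "lapp L j (\<lambda>t. f (t + s) + f (- (t + s))) = lapp L j (\<lambda>t. f (t + s)) + lapp L j (\<lambda>t. f (t - s))"
  unfolding lapp_eq_lpair using assms by (intro lpair_even_part_shift) (simp_all add: L_even)

lemma mult_orth_even_part_poly:
  assumes supp: "lsupp phi \<subseteq> {- int N..int N}"
    and orth: "\<And>i k. i < r \<Longrightarrow> \<bar>k\<bar> \<le> int (n i) - 1 \<Longrightarrow> lapp L i (\<lambda>t. phi (t + k)) = 0"
  shows "mult_orth r (Mmom L) n (even_part_poly N phi)"
proof (rule mult_orth_poly_wsym)
  fix i s assume "i < r" "\<bar>s\<bar> \<le> int (n i) - 1"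
  then show "lapp L i (\<lambda>t. poly_wsym (even_part_poly N phi) (t + s)) = 0"
    using lapp_even_part_shift[OF \<open>i < r\<close> finite_lsupp_interval[OF supp], of s] orth[of i s] orth[of i "- s"]
    by (simp add: even_part_poly(2)[OF supp])
qed

(* Of the binomial expansion of (w + 1/w)^(n_j) only the two end terms survive, and they agree
   because L_j is even. *)
lemma mapp_even_part_poly_edge:
  assumes "j < r" and supp: "lsupp phi \<subseteq> {- int N..int N}"
    and orth: "\<And>k. - int (n j) \<le> k \<Longrightarrow> k \<le> int (n j) - 1 \<Longrightarrow> lapp L j (\<lambda>t. phi (t + k)) = 0"
  shows "mapp (Mmom L) j (even_part_poly N phi * monom 1 (n j)) = 2 * lapp L j (\<lambda>t. phi (t + int (n j)))"
proof -
  let ?Q = "even_part_poly N phi"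
  have shift: "lapp L j (\<lambda>t. poly_wsym ?Q (t + s)) = lapp L j (\<lambda>t. phi (t + s)) + lapp L j (\<lambda>t. phi (t - s))" for s
    using lapp_even_part_shift[OF assms(1) finite_lsupp_interval[OF supp]] by (simp add: even_part_poly(2)[OF supp])
  show ?thesis
  proof (cases "n j = 0")
    case True
    then show ?thesis
      using shift[of 0] by (simp add: mapp_Mmom_eq_lapp)
  next
    case False
    have "lapp L j (\<lambda>t. poly_wsym ?Q (t + s)) = 0" if "\<bar>s\<bar> < int (n j)" for s
      using that shift[of s] orth[of s] orth[of "- s"] by simp
    then have "mapp (Mmom L) j (?Q * monom 1 (n j)) =
        lapp L j (\<lambda>t. poly_wsym ?Q (t - int (n j))) + lapp L j (\<lambda>t. poly_wsym ?Q (t + int (n j)))"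
      using False by (simp add: mapp_Mmom_mult_monom lapp_wsym_mult_pow_edge)
    also have "\<dots> = 2 * lapp L j (\<lambda>t. phi (t + int (n j)))"
      using shift[of "- int (n j)"] shift[of "int (n j)"] orth[of "- int (n j)"] False by simp
    finally show ?thesis .
  qed
qed

definition Phi_diag :: "(nat \<Rightarrow> nat) \<Rightarrow> int \<Rightarrow> complex" where
  "Phi_diag n = Phi r L (\<lambda>i. int (n i)) (\<lambda>i. int (n i))"

lemma is_Phi_diag: "\<forall>i\<ge>r. n i = 0 \<Longrightarrow> is_Phi r L (\<lambda>i. int (n i)) (\<lambda>i. int (n i)) (Phi_diag n)"
  unfolding Phi_diag_def by (rule is_Phi_Phi[OF lnormal_diag])

lemma lsupp_Phi_diag: "\<forall>i\<ge>r. n i = 0 \<Longrightarrow> lsupp (Phi_diag n) \<subseteq> {- int (\<Sum>j<r. n j)..int (\<Sum>j<r. n j)}"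
  using lsupp_is_Phi[OF is_Phi_diag] by (simp add: vabs_of_nat)

lemma Phi_diag_orth:
  "\<forall>i\<ge>r. n i = 0 \<Longrightarrow> i < r \<Longrightarrow> - int (n i) \<le> k \<Longrightarrow> k \<le> int (n i) - 1 \<Longrightarrow>
    lapp L i (\<lambda>t. Phi_diag n (t + k)) = 0"
  using is_Phi_diag by (simp add: is_Phi_def)

lemma Phi_diag_orth_abs:
  "\<forall>i\<ge>r. n i = 0 \<Longrightarrow> i < r \<Longrightarrow> \<bar>k\<bar> \<le> int (n i) - 1 \<Longrightarrow> lapp L i (\<lambda>t. Phi_diag n (t + k)) = 0"
  by (rule Phi_diag_orth) auto

lemma Phi_diag_top_bottom:
  "\<forall>i\<ge>r. n i = 0 \<Longrightarrow>
    Phi_diag n (int (\<Sum>j<r. n j)) + Phi_diag n (- int (\<Sum>j<r. n j)) = 1 + alpha r L (\<lambda>i. int (n i)) (\<lambda>i. int (n i))"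
  using is_Phi_diag by (simp add: alpha_def Phi_diag_def[symmetric] is_Phi_def vabs_of_nat)

lemma Phi_diag_edge_nonzero:
  assumes adm: "\<forall>i\<ge>r. n i = 0" and "j < r"
  shows "lapp L j (\<lambda>t. Phi_diag n (t + int (n j))) \<noteq> 0"
proof
  assume edge: "lapp L j (\<lambda>t. Phi_diag n (t + int (n j))) = 0"
  let ?n = "\<lambda>i. int (n i)" and ?n' = "\<lambda>i. int ((n(j := n j + 1)) i)"
  have phi: "is_Phi r L ?n ?n (Phi_diag n)"
    by (rule is_Phi_diag[OF adm])
  have "vabs r ?n' = vabs r ?n + 1"
    by (simp only: vabs_of_nat sum_fun_upd_Suc[OF \<open>j < r\<close>])
  then have "Phi_diag n = (\<lambda>_. 0)"
  proof (intro lnormal_kernel_trivial[OF lnormal_step[OF adm \<open>j < r\<close>]])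
    show "lsupp (Phi_diag n) \<subseteq> {- vabs r ?n..vabs r ?n' - 1}"
      using lsupp_is_Phi[OF phi] \<open>vabs r ?n' = vabs r ?n + 1\<close> by simp
    fix i k assume "i < r" "- ?n i \<le> k" "k \<le> ?n' i - 1"
    then consider "k \<le> ?n i - 1" | "i = j" "k = ?n j"
      by (cases "i = j"; cases "k = ?n j") auto
    then show "lapp L i (\<lambda>t. Phi_diag n (t + k)) = 0"
      by cases (use edge phi \<open>i < r\<close> \<open>- ?n i \<le> k\<close> in \<open>auto simp: is_Phi_def\<close>)
  qed
  with phi show False
    by (simp add: is_Phi_def)
qed

lemma diag_poly:
  assumes adm: "\<forall>i\<ge>r. n i = 0"
  defines "Q \<equiv> even_part_poly (\<Sum>j<r. n j) (Phi_diag n)"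
  shows "degree Q \<le> (\<Sum>j<r. n j)"
    and "coeff Q (\<Sum>j<r. n j) = 1 + alpha r L (\<lambda>i. int (n i)) (\<lambda>i. int (n i))"
    and "mult_orth r (Mmom L) n Q"
    and "j < r \<Longrightarrow> mapp (Mmom L) j (Q * monom 1 (n j)) \<noteq> 0"
proof -
  note supp = lsupp_Phi_diag[OF adm]
  show "degree Q \<le> (\<Sum>j<r. n j)"
    unfolding Q_def by (rule even_part_poly(1)[OF supp])
  show "coeff Q (\<Sum>j<r. n j) = 1 + alpha r L (\<lambda>i. int (n i)) (\<lambda>i. int (n i))"
    unfolding Q_def coeff_even_part_poly[OF supp] by (rule Phi_diag_top_bottom[OF adm])
  show "mult_orth r (Mmom L) n Q"
    unfolding Q_def by (rule mult_orth_even_part_poly[OF supp Phi_diag_orth_abs[OF adm]])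
  show "mapp (Mmom L) j (Q * monom 1 (n j)) \<noteq> 0" if "j < r"
    using mapp_even_part_poly_edge[OF that supp Phi_diag_orth[OF adm that]] Phi_diag_edge_nonzero[OF adm that]
    by (simp add: Q_def)
qed

lemma one_plus_alpha_nonzero:
  assumes adm: "\<forall>i\<ge>r. n i = 0"
    and determined: "\<And>D. mult_orth r (Mmom L) n D \<Longrightarrow> degree D < (\<Sum>j<r. n j) \<Longrightarrow> D = 0"
  shows "1 + alpha r L (\<lambda>i. int (n i)) (\<lambda>i. int (n i)) \<noteq> 0"
proof
  let ?Q = "even_part_poly (\<Sum>j<r. n j) (Phi_diag n)"
  assume "1 + alpha r L (\<lambda>i. int (n i)) (\<lambda>i. int (n i)) = 0"
  then have "?Q = 0 \<or> degree ?Q < (\<Sum>j<r. n j)"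
    using eq_zero_or_degree_less[OF diag_poly(1)[OF adm]] diag_poly(2)[OF adm] by simp
  then have "?Q = 0"
    using determined[OF diag_poly(3)[OF adm]] by blast
  with diag_poly(4)[OF adm, of 0] r_pos show False
    by (simp add: mapp_def)
qed

(* Subtracting a multiple of the diagonal polynomial Q of n removes the top coefficient of D; the one
   condition of n + e_j that Q violates then forces this coefficient to vanish. *)
lemma mult_orth_determined_step:
  assumes adm: "\<forall>i\<ge>r. n i = 0" and "j < r"
    and determined: "\<And>D. mult_orth r (Mmom L) n D \<Longrightarrow> degree D < (\<Sum>i<r. n i) \<Longrightarrow> D = 0"
    and orthD: "mult_orth r (Mmom L) (n(j := n j + 1)) D"
    and degD: "degree D < (\<Sum>i<r. (n(j := n j + 1)) i)"
  shows "D = 0"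
proof -
  define N where "N = (\<Sum>i<r. n i)"
  define a where "a = 1 + alpha r L (\<lambda>i. int (n i)) (\<lambda>i. int (n i))"
  define Q where "Q = even_part_poly N (Phi_diag n)"
  have Q: "degree Q \<le> N" "coeff Q N = a" "mult_orth r (Mmom L) n Q"
    and edge: "mapp (Mmom L) j (Q * monom 1 (n j)) \<noteq> 0"
    using diag_poly[OF adm] \<open>j < r\<close> by (simp_all add: N_def a_def Q_def)
  have D: "degree D \<le> N" "mult_orth r (Mmom L) n D" "mapp (Mmom L) j (D * monom 1 (n j)) = 0"
    using degD sum_fun_upd_Suc[OF \<open>j < r\<close>, of n] orthD mult_orth_fun_upd_Suc[OF \<open>j < r\<close>]
    by (simp_all add: N_def)
  define E where "E = smult a D - smult (coeff D N) Q"
  have "degree E \<le> N"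
    using D(1) Q(1) unfolding E_def by (meson degree_diff_le degree_smult_le le_trans)
  moreover have "coeff E N = 0"
    by (simp add: E_def Q(2))
  moreover have "mult_orth r (Mmom L) n E"
    unfolding E_def by (rule mult_orth_lincomb[OF D(2) Q(3)])
  ultimately have "E = 0"
    using eq_zero_or_degree_less determined N_def by metis
  then have "coeff D N * mapp (Mmom L) j (Q * monom 1 (n j)) = 0"
    using mapp_lincomb_mult_monom[of "Mmom L" j a D "coeff D N" Q "n j"] D(3)
    by (simp add: E_def mapp_def)
  then have "coeff D N = 0"
    using edge by simp
  then show "D = 0"
    using eq_zero_or_degree_less[OF D(1)] determined D(2) N_def by metis
qed

lemma mult_orth_determined:
  assumes "\<forall>i\<ge>r. n i = 0" and "mult_orth r (Mmom L) n D" and "degree D < (\<Sum>j<r. n j)"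
  shows "D = 0"
proof -
  have "\<forall>D. mult_orth r (Mmom L) n D \<longrightarrow> degree D < (\<Sum>j<r. n j) \<longrightarrow> D = 0"
    using assms(1)
  proof (induction n rule: multi_index_induct)
    case (step n j)
    then show ?case
      using mult_orth_determined_step by blast
  qed simp
  with assms(2,3) show ?thesis
    by blast
qed

lemma alpha_ne_minus_one: "\<forall>i\<ge>r. n i = 0 \<Longrightarrow> alpha r L (\<lambda>i. int (n i)) (\<lambda>i. int (n i)) \<noteq> - 1"
  using one_plus_alpha_nonzero mult_orth_determined by (metis add.commute add_eq_0_iff)

lemma mop_eqI:
  assumes adm: "\<forall>i\<ge>r. n i = 0" and P: "is_mop r (Mmom L) n P"
  shows "mnormal r (Mmom L) n" and "mop r (Mmom L) n = P"
proof -
  have uniq: "P' = P" if "is_mop r (Mmom L) n P'" for P'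
  proof -
    have "degree P' = (\<Sum>j<r. n j)" "coeff P' (\<Sum>j<r. n j) = 1"
      "degree P = (\<Sum>j<r. n j)" "coeff P (\<Sum>j<r. n j) = 1"
      using that P unfolding is_mop_def by auto
    then have "degree (P' - P) \<le> (\<Sum>j<r. n j)" "coeff (P' - P) (\<Sum>j<r. n j) = 0"
      by (simp_all add: degree_diff_le)
    then have "P' - P = 0 \<or> degree (P' - P) < (\<Sum>j<r. n j)"
      by (rule eq_zero_or_degree_less)
    moreover have "mult_orth r (Mmom L) n (P' - P)"
      using that P by (simp add: is_mop_iff mult_orth_diff)
    ultimately have "P' - P = 0"
      using mult_orth_determined[OF adm] by blast
    then show ?thesis
      by simp
  qed
  with P show "mnormal r (Mmom L) n"
    unfolding mnormal_def by blast
  show "mop r (Mmom L) n = P"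
    unfolding mop_def by (rule the_equality) (use P uniq in blast)+
qed

lemma mop_even_part_poly:
  assumes adm: "\<forall>i\<ge>r. n i = 0"
    and supp: "lsupp phi \<subseteq> {- int (\<Sum>j<r. n j)..int (\<Sum>j<r. n j)}"
    and orth: "\<And>i k. i < r \<Longrightarrow> \<bar>k\<bar> \<le> int (n i) - 1 \<Longrightarrow> lapp L i (\<lambda>t. phi (t + k)) = 0"
    and top: "phi (int (\<Sum>j<r. n j)) + phi (- int (\<Sum>j<r. n j)) \<noteq> 0"
  shows "mnormal r (Mmom L) n"
    and "mop r (Mmom L) n = smult (1 / (phi (int (\<Sum>j<r. n j)) + phi (- int (\<Sum>j<r. n j))))
      (even_part_poly (\<Sum>j<r. n j) phi)"
proof -
  define N where "N = (\<Sum>j<r. n j)"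
  define c where "c = phi (int N) + phi (- int N)"
  define Q where "Q = even_part_poly N phi"
  have supp': "lsupp phi \<subseteq> {- int N..int N}"
    using supp by (simp add: N_def)
  have "c \<noteq> 0"
    using top by (simp add: c_def N_def)
  have "coeff Q N = c"
    unfolding Q_def c_def by (rule coeff_even_part_poly[OF supp'])
  moreover have "degree Q \<le> N"
    unfolding Q_def by (rule even_part_poly(1)[OF supp'])
  ultimately have "degree Q = N"
    using le_degree[of Q N] \<open>c \<noteq> 0\<close> by simp
  have orthQ: "mult_orth r (Mmom L) n Q"
    unfolding Q_def by (rule mult_orth_even_part_poly[OF supp' orth])
  have "mult_orth r (Mmom L) n (smult (1 / c) Q - smult 0 Q)"
    by (rule mult_orth_lincomb[OF orthQ orthQ])
  then have "is_mop r (Mmom L) n (smult (1 / c) Q)"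
    using \<open>degree Q = N\<close> \<open>coeff Q N = c\<close> \<open>c \<noteq> 0\<close> by (simp add: is_mop_iff N_def)
  from mop_eqI[OF adm this] show "mnormal r (Mmom L) n"
    "mop r (Mmom L) n = smult (1 / (phi (int (\<Sum>j<r. n j)) + phi (- int (\<Sum>j<r. n j))))
      (even_part_poly (\<Sum>j<r. n j) phi)"
    by (simp_all only: c_def Q_def N_def)
qed

lemma Phi_diag_top_bottom_nonzero:
  assumes "\<forall>i\<ge>r. n i = 0"
  shows "Phi_diag n (int (\<Sum>j<r. n j)) + Phi_diag n (- int (\<Sum>j<r. n j)) \<noteq> 0"
  unfolding Phi_diag_top_bottom[OF assms] by (rule one_plus_alpha_nonzero[OF assms mult_orth_determined[OF assms]])

lemma mnormal_Mmom: "\<forall>i\<ge>r. n i = 0 \<Longrightarrow> mnormal r (Mmom L) n"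
  by (rule mop_even_part_poly(1)[OF _ lsupp_Phi_diag Phi_diag_orth_abs Phi_diag_top_bottom_nonzero])

lemma mop_diag:
  assumes adm: "\<forall>i\<ge>r. n i = 0" and "z \<noteq> 0"
  shows "poly (mop r (Mmom L) n) (z + 1 / z) = 1 / (1 + alpha r L (\<lambda>i. int (n i)) (\<lambda>i. int (n i))) *
    (leval (Phi_diag n) z + leval (Phi_diag n) (1 / z))"
proof -
  note supp = lsupp_Phi_diag[OF adm]
  have "mop r (Mmom L) n = smult (1 / (1 + alpha r L (\<lambda>i. int (n i)) (\<lambda>i. int (n i))))
      (even_part_poly (\<Sum>j<r. n j) (Phi_diag n))"
    using mop_even_part_poly(2)[OF adm supp Phi_diag_orth_abs[OF adm] Phi_diag_top_bottom_nonzero[OF adm]]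
    by (simp only: Phi_diag_top_bottom[OF adm])
  then show ?thesis
    by (simp only: poly_smult poly_even_part_poly[OF supp \<open>z \<noteq> 0\<close>])
qed

lemma Phi_lower:
  assumes adm: "\<forall>i\<ge>r. n i = 0" and "j < r" and "n j \<ge> 1"
  defines "psi \<equiv> Phi r L (\<lambda>i. int (n i)) ((\<lambda>i. int (n i))(j := int (n j) - 1))"
  shows "lsupp psi \<subseteq> {- int (\<Sum>i<r. n i) + 1..int (\<Sum>i<r. n i)}"
    and "psi (int (\<Sum>i<r. n i)) = 1"
    and "\<And>i k. i < r \<Longrightarrow> \<bar>k\<bar> \<le> int (n i) - 1 \<Longrightarrow> lapp L i (\<lambda>t. psi (t + k)) = 0"
proof -
  define n' where "n' = n(j := n j - 1)"
  let ?m = "(\<lambda>i. int (n i))(j := int (n j) - 1)"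
  have n: "n'(j := n' j + 1) = n" and m: "(\<lambda>i. int (n' i)) = ?m"
    using \<open>n j \<ge> 1\<close> by (auto simp: n'_def of_nat_diff)
  have "\<forall>i\<ge>r. n' i = 0"
    using adm \<open>j < r\<close> by (simp add: n'_def)
  from is_Phi_Phi[OF lnormal_step[OF this \<open>j < r\<close>]] have psi: "is_Phi r L (\<lambda>i. int (n i)) ?m psi"
    unfolding n m psi_def .
  have "vabs r ?m = int (\<Sum>i<r. n i) - 1"
    using sum_fun_upd_Suc[OF \<open>j < r\<close>, of n'] unfolding m[symmetric] vabs_of_nat n by simp
  then show "lsupp psi \<subseteq> {- int (\<Sum>i<r. n i) + 1..int (\<Sum>i<r. n i)}"
    using lsupp_is_Phi[OF psi] by (simp add: vabs_of_nat)
  show "psi (int (\<Sum>i<r. n i)) = 1"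
    using psi by (simp add: is_Phi_def vabs_of_nat)
  show "lapp L i (\<lambda>t. psi (t + k)) = 0" if "i < r" "\<bar>k\<bar> \<le> int (n i) - 1" for i k
  proof -
    have "- ?m i \<le> k" "k \<le> int (n i) - 1"
      using that by auto
    with psi \<open>i < r\<close> show ?thesis
      unfolding is_Phi_def by blast
  qed
qed

lemma mop_lower:
  assumes adm: "\<forall>i\<ge>r. n i = 0" and "j < r" and "n j \<ge> 1" and "z \<noteq> 0"
  defines "psi \<equiv> Phi r L (\<lambda>i. int (n i)) ((\<lambda>i. int (n i))(j := int (n j) - 1))"
  shows "poly (mop r (Mmom L) n) (z + 1 / z) = leval psi z + leval psi (1 / z)"
proof -
  note psi = Phi_lower[OF adm \<open>j < r\<close> \<open>n j \<ge> 1\<close>, folded psi_def]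
  have supp: "lsupp psi \<subseteq> {- int (\<Sum>i<r. n i)..int (\<Sum>i<r. n i)}"
    using psi(1) by auto
  have "psi (- int (\<Sum>i<r. n i)) = 0"
    using psi(1) by (auto simp: lsupp_def)
  with psi(2) have top: "psi (int (\<Sum>i<r. n i)) + psi (- int (\<Sum>i<r. n i)) = 1"
    by simp
  have "mop r (Mmom L) n = even_part_poly (\<Sum>i<r. n i) psi"
    using mop_even_part_poly(2)[OF adm supp psi(3)] by (simp only: top) simp
  then show ?thesis
    by (simp only: poly_even_part_poly[OF supp \<open>z \<noteq> 0\<close>])
qed

end

theorem theorem10p2:
  fixes r :: nat and L :: "nat \<Rightarrow> int \<Rightarrow> complex"
  assumes "r \<ge> 1"
    and sym: "\<forall>j<r. \<forall>k::nat. L j (int k) = L j (- int k)"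
    and norm: "\<forall>n::nat \<Rightarrow> nat. (\<forall>j\<ge>r. n j = 0) \<longrightarrow>
        lnormal r L (\<lambda>i. int (n i)) (\<lambda>i. int (n i)) \<and>
        (\<forall>j<r. lnormal r L (\<lambda>i. int ((n(j := n j + 1)) i)) (\<lambda>i. int (n i)))"
  shows "perfect r (Mmom L) \<and>
    (\<forall>n::nat \<Rightarrow> nat. (\<forall>j\<ge>r. n j = 0) \<longrightarrow>
       (let nn = (\<lambda>i. int (n i)) in
        alpha r L nn nn \<noteq> -1 \<and>
        (\<forall>z::complex. z \<noteq> 0 \<longrightarrow>
           poly (mop r (Mmom L) n) (z + 1 / z) =
             1 / (1 + alpha r L nn nn) * (leval (Phi r L nn nn) z + leval (Phi r L nn nn) (1 / z))) \<and>
        (\<forall>j<r. n j \<ge> 1 \<longrightarrow> (\<forall>z::complex. z \<noteq> 0 \<longrightarrow>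
           poly (mop r (Mmom L) n) (z + 1 / z) =
             leval (Phi r L nn (nn(j := nn j - 1))) z + leval (Phi r L nn (nn(j := nn j - 1))) (1 / z)))))"
proof -
  interpret symmetric_normal_system r L
    using assms by unfold_locales blast+
  show ?thesis
    using mnormal_Mmom alpha_ne_minus_one mop_diag mop_lower
    by (auto simp: perfect_def Let_def Phi_diag_def)
qed

end
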